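(* Let $\mathfrak{H}$ be a Hoffman graph in which every slim vertex has exactly one fat neighbour, and suppose $\mathcal{S}(\mathfrak{H})$ is isomorphic to $\mathcal{Q}_{p,q,r}$ for some non-negative integers $p,q,r$ with $p+q\le r$. Then $\mathfrak{H}$ is an induced Hoffman subgraph of a Hoffman graph $\mathfrak{H}'$ with $V^s(\mathfrak{H}')=V^s(\mathfrak{H})$ that has a decomposition $\{\mathfrak{H}^i\}_{i=1}^r$ in which every $\mathfrak{H}^i$ is isomorphic to $\mathfrak{H}_{\rm XVI}$, $\mathfrak{H}_{\rm XVII}$, or $\mathfrak{H}_{\rm II}$. In particular, if $r\ge2$ then $\mathfrak{H}$ is $(-1-\tau)$-reducible, where $\tau=\frac{1+\sqrt5}{2}$.
   Context: A Hoffman graph $\mathfrak{H}$ is a finite simple graph $H$ together with a labeling of each vertex as slim or fat, such that every fat vertex is adjacent to at least one slim vertex and the fat vertices are pairwise non-adjacent. $V^s(\mathfrak{H})$ denotes the set of slim vertices and $N^f_{\mathfrak{H}}(x)$ the set of fat neighbours of $x$. Isomorphisms of Hoffman graphs are graph isomorphisms preserving labels. An induced Hoffman subgraph is a Hoffman graph whose underlying graph is an induced subgraph with inherited labels. Writing the adjacency matrix of $H$ with fat vertices last as $\begin{pmatrix}A_s & C\\ C^T & O\end{pmatrix}$, set $B(\mathfrak{H})=A_s-CC^T$; $\lambda_{\min}(\mathfrak{H})$ is its smallest eigenvalue. A decomposition of $\mathfrak{H}$ is a family $\{\mathfrak{H}^i\}_{i=1}^n$ of induced Hoffman subgraphs such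 that: (i) $V(\mathfrak{H})=\bigcup_i V(\mathfrak{H}^i)$; (ii) slim vertex sets of distinct members are disjoint; (iii) if $x\in V^s(\mathfrak{H}^i)$ and $y$ is a fat neighbour of $x$ in $\mathfrak{H}$, then $y\in V(\mathfrak{H}^i)$; (iv) if $x\in V^s(\mathfrak{H}^i)$, $y\in V^s(\mathfrak{H}^j)$, $i\neq j$, then $|N^f_{\mathfrak{H}}(x)\cap N^f_{\mathfrak{H}}(y)|\le 1$, with equality iff $x,y$ are adjacent. For $\alpha<0$, a Hoffman graph $\mathfrak{H}$ with $\lambda_{\min}(\mathfrak{H})\ge\alpha$ is $\alpha$-reducible if there exist a Hoffman graph $\mathfrak{H}'$ containing $\mathfrak{H}$ as an induced Hoffman subgraph and a decomposition $\{\mathfrak{H}^1,\mathfrak{H}^2\}$ of $\mathfrak{H}'$ with $\lambda_{\min}(\mathfrak{H}^i)\ge\alpha$ and $V^s(\mathfrak{H}^i)\cap V^s(\mathfrak{H})\ne\emptyset$ for $i=1,2$. The special graph $\mathcal{S}(\mathfrak{H})$ is the edge-signed graph with vertex set $V^s(\mathfrak{H})$ in which distinct $u,v$ are joined by a $(+)$-edge iff adjacent in $\mathfrak{H}$ with no common fat neighbour, by a $(-)$-edge iff non-adjacent in $\mathfrak{H}$ with a common fat neighbour, and not joined otherwise. For $p+q\le r$, $\mathcal{Q}_{p,q,r}$ is the edge-signed graph with vertex set a disjoint union $V_p\cup V_q\cup V_r$ of sizes $p,q,r$, with disjoint $U_p,U_q\subseteq V_r$ of sizes $p,q$ and bijections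 $\sigma:V_p\to U_p$, $\rho:V_q\to U_q$; $(+)$-edges: all pairs of distinct vertices of $V_r$ and all $\{v,\sigma(v)\}$, $v\in V_p$; $(-)$-edges: all $\{v,\rho(v)\}$, $v\in V_q$; no other edges. Named Hoffman graphs: $\mathfrak{H}_{\rm II}$ has one slim vertex $v$, two fat vertices $f_1,f_2$, edges $\{v,f_1\},\{v,f_2\}$. $\mathfrak{H}_{\rm XVI}$ has slim vertices $v_1,v_2$, fat vertices $f_1,f_2,f_3$, edges $\{v_1,v_2\},\{v_1,f_1\},\{v_1,f_2\},\{v_2,f_3\}$. $\mathfrak{H}_{\rm XVII}$ has slim vertices $v_1,v_2$, fat vertices $f_1,f_2$, edges $\{v_1,f_1\},\{v_1,f_2\},\{v_2,f_2\}$. *)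

theory Defs
  imports Complex_Main
begin

record 'a hgraph =
  hverts :: "'a set"
  hfat :: "'a set"
  hadj :: "'a \<Rightarrow> 'a \<Rightarrow> bool"

definition slim :: "('a, 'b) hgraph_scheme \<Rightarrow> 'a set" where
  "slim H = hverts H - hfat H"

definition fat_nbrs :: "('a, 'b) hgraph_scheme \<Rightarrow> 'a \<Rightarrow> 'a set" where
  "fat_nbrs H x = {f \<in> hfat H. hadj H x f}"

definition hoffman_graph :: "'a hgraph \<Rightarrow> bool" where
  "hoffman_graph H \<longleftrightarrow>
     finite (hverts H) \<and> hfat H \<subseteq> hverts H \<and>
     (\<forall>x y. hadj H x y \<longrightarrow> x \<in> hverts H \<and> y \<in> hverts H) \<and>
     (\<forall>x y. hadj H x y \<longrightarrow> hadj H y x) \<and>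
     (\<forall>x. \<not> hadj H x x) \<and>
     (\<forall>f \<in> hfat H. \<exists>x \<in> slim H. hadj H f x) \<and>
     (\<forall>f \<in> hfat H. \<forall>g \<in> hfat H. \<not> hadj H f g)"

definition hiso :: "'a hgraph \<Rightarrow> 'b hgraph \<Rightarrow> bool" where
  "hiso G K \<longleftrightarrow> (\<exists>f. bij_betw f (hverts G) (hverts K) \<and>
      (\<forall>x \<in> hverts G. x \<in> hfat G \<longleftrightarrow> f x \<in> hfat K) \<and>
      (\<forall>x \<in> hverts G. \<forall>y \<in> hverts G. hadj G x y \<longleftrightarrow> hadj K (f x) (f y)))"

definition induced_hsub :: "'a hgraph \<Rightarrow> 'a hgraph \<Rightarrow> bool" where
  "induced_hsub K G \<longleftrightarrow> hoffman_graph K \<and> hverts K \<subseteq> hverts G \<and>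
     hfat K = hfat G \<inter> hverts K \<and>
     (\<forall>x y. hadj K x y \<longleftrightarrow> (x \<in> hverts K \<and> y \<in> hverts K \<and> hadj G x y))"

text \<open>The matrix B(H) = A_s - C C^T, indexed by the slim vertices.\<close>
definition Bmat :: "'a hgraph \<Rightarrow> 'a \<Rightarrow> 'a \<Rightarrow> real" where
  "Bmat H x y = (if hadj H x y then 1 else 0) - real (card (fat_nbrs H x \<inter> fat_nbrs H y))"

definition is_eigenvalue_on :: "'a set \<Rightarrow> ('a \<Rightarrow> 'a \<Rightarrow> real) \<Rightarrow> real \<Rightarrow> bool" where
  "is_eigenvalue_on S M \<mu> \<longleftrightarrow> (\<exists>v :: 'a \<Rightarrow> real. (\<exists>x \<in> S. v x \<noteq> 0) \<and>
      (\<forall>x \<in> S. (\<Sum>y \<in> S. M x y * v y) = \<mu> * v x))"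

definition lambda_min :: "'a hgraph \<Rightarrow> real" where
  "lambda_min H = Min {\<mu>. is_eigenvalue_on (slim H) (Bmat H) \<mu>}"

definition decomposition :: "'a hgraph \<Rightarrow> 'i set \<Rightarrow> ('i \<Rightarrow> 'a hgraph) \<Rightarrow> bool" where
  "decomposition G I Hs \<longleftrightarrow>
     (\<forall>i \<in> I. induced_hsub (Hs i) G) \<and>
     hverts G = (\<Union>i \<in> I. hverts (Hs i)) \<and>
     (\<forall>i \<in> I. \<forall>j \<in> I. i \<noteq> j \<longrightarrow> slim (Hs i) \<inter> slim (Hs j) = {}) \<and>
     (\<forall>i \<in> I. \<forall>x \<in> slim (Hs i). \<forall>y \<in> hfat G. hadj G x y \<longrightarrow> y \<in> hverts (Hs i)) \<and>
     (\<forall>i \<in> I. \<forall>j \<in> I. i \<noteq> j \<longrightarrow> (\<forall>x \<in> slim (Hs i). \<forall>y \<in> slim (Hs j).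
         card (fat_nbrs G x \<inter> fat_nbrs G y) \<le> 1 \<and>
         (card (fat_nbrs G x \<inter> fat_nbrs G y) = 1 \<longleftrightarrow> hadj G x y)))"

definition reducible :: "real \<Rightarrow> 'a hgraph \<Rightarrow> bool" where
  "reducible \<alpha> H \<longleftrightarrow> lambda_min H \<ge> \<alpha> \<and>
     (\<exists>H' Hs. hoffman_graph H' \<and> induced_hsub H H' \<and>
        decomposition H' {1::nat, 2} Hs \<and>
        (\<forall>i \<in> {1::nat, 2}. lambda_min (Hs i) \<ge> \<alpha> \<and> slim (Hs i) \<inter> slim H \<noteq> {}))"

record 'a sgraph =
  sverts :: "'a set"
  spos :: "'a \<Rightarrow> 'a \<Rightarrow> bool"
  sneg :: "'a \<Rightarrow> 'a \<Rightarrow> bool"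

definition sgraph_iso :: "'a sgraph \<Rightarrow> 'b sgraph \<Rightarrow> bool" where
  "sgraph_iso S T \<longleftrightarrow> (\<exists>f. bij_betw f (sverts S) (sverts T) \<and>
      (\<forall>x \<in> sverts S. \<forall>y \<in> sverts S.
         (spos S x y \<longleftrightarrow> spos T (f x) (f y)) \<and> (sneg S x y \<longleftrightarrow> sneg T (f x) (f y))))"

definition special_graph :: "'a hgraph \<Rightarrow> 'a sgraph" where
  "special_graph H = \<lparr> sverts = slim H,
     spos = (\<lambda>u v. u \<in> slim H \<and> v \<in> slim H \<and> u \<noteq> v \<and> hadj H u v \<and>
                    fat_nbrs H u \<inter> fat_nbrs H v = {}),
     sneg = (\<lambda>u v. u \<in> slim H \<and> v \<in> slim H \<and> u \<noteq> v \<and> \<not> hadj H u v \<and>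
                    fat_nbrs H u \<inter> fat_nbrs H v \<noteq> {}) \<rparr>"

text \<open>A concrete copy of Q_{p,q,r} on nat: V_r = {0..<r}, U_p = {0..<p},
  U_q = {p..<p+q}, V_p = {r..<r+p} with sigma(r+i) = i,
  V_q = {r+p..<r+p+q} with rho(r+p+i) = p+i.\<close>
definition Qgraph :: "nat \<Rightarrow> nat \<Rightarrow> nat \<Rightarrow> nat sgraph" where
  "Qgraph p q r = \<lparr> sverts = {0..<r+p+q},
     spos = (\<lambda>u v. (u < r \<and> v < r \<and> u \<noteq> v) \<or>
                    (r \<le> u \<and> u < r+p \<and> v = u - r) \<or>
                    (r \<le> v \<and> v < r+p \<and> u = v - r)),
     sneg = (\<lambda>u v. (r+p \<le> u \<and> u < r+p+q \<and> v = u - r) \<or>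
                    (r+p \<le> v \<and> v < r+p+q \<and> u = v - r)) \<rparr>"

definition edges_adj :: "(nat \<times> nat) list \<Rightarrow> nat \<Rightarrow> nat \<Rightarrow> bool" where
  "edges_adj es x y \<longleftrightarrow> (x, y) \<in> set es \<or> (y, x) \<in> set es"

definition H_II :: "nat hgraph" where
  "H_II = \<lparr> hverts = {0,1,2}, hfat = {1,2}, hadj = edges_adj [(0,1),(0,2)] \<rparr>"

definition H_XVI :: "nat hgraph" where
  "H_XVI = \<lparr> hverts = {0,1,2,3,4}, hfat = {2,3,4},
     hadj = edges_adj [(0,1),(0,2),(0,3),(1,4)] \<rparr>"

definition H_XVII :: "nat hgraph" where
  "H_XVII = \<lparr> hverts = {0,1,2,3}, hfat = {2,3},
     hadj = edges_adj [(0,2),(0,3),(1,3)] \<rparr>"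

definition golden_tau :: real where
  "golden_tau = (1 + sqrt 5) / 2"

end

theory Submission
  imports Defs "Jordan_Normal_Form.Spectral_Radius"
begin

(* Enumerate the slim vertices of H along the isomorphism S(H) ~ Q_{p,q,r}:
   g 0, ..., g (r-1) form V_r and g (r+k), k < p+q, is matched to g k.  As each slim vertex
   x has a unique fat neighbour fat_of x, a (+)-edge means "adjacent with different fat
   neighbours", a (-)-edge "non-adjacent with the same fat neighbour", and a non-edge
   "adjacent iff same fat neighbour".  Adding a new fat vertex F adjacent to all of V_r gives
   a Hoffman graph H' with the same slim vertices, decomposed into the pieces
   {g k, fat_of (g k), F} (plus {g (r+k), fat_of (g (r+k))} if k < p+q), which are copies of
   H_XVI (k < p), H_XVII (p <= k < p+q) and H_II (otherwise).
   For reducibility we bound quadratic forms: B(H) = B(H') + j j^T with j the indicator of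
   V_r, the form of B(H') is the sum of those of the pieces, and each piece has form
   >= (-1-tau)|v|^2 by a 2x2 golden-ratio computation; a form bound bounds lambda_min, which
   exists because real symmetric matrices have real eigenvalues.  Merging the first piece
   and the remaining ones gives the required two-part decomposition. *)

section \<open>Eigenvalues of real symmetric matrices\<close>

lemma eigenvalue_of_is_eigenvalue_on:
  fixes M :: "'a \<Rightarrow> 'a \<Rightarrow> real"
  assumes g: "bij_betw g {0..<n} S" and ev: "is_eigenvalue_on S M \<mu>"
  shows "eigenvalue (mat n n (\<lambda>(i,j). M (g i) (g j))) \<mu>"
proof -
  let ?A = "mat n n (\<lambda>(i,j). M (g i) (g j))"
  from ev obtain v where v0: "\<exists>x\<in>S. v x \<noteq> 0"
    and eq: "\<forall>x\<in>S. (\<Sum>y\<in>S. M x y * v y) = \<mu> * v x"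
    unfolding is_eigenvalue_on_def by blast
  define w where "w = vec n (\<lambda>i. v (g i))"
  from v0 obtain x where x: "x \<in> S" "v x \<noteq> 0" by blast
  then obtain i where i: "i < n" "g i = x" using g unfolding bij_betw_def by auto
  have "w \<noteq> 0\<^sub>v n" using i x unfolding w_def by (metis index_vec index_zero_vec(1))
  moreover have "?A *\<^sub>v w = \<mu> \<cdot>\<^sub>v w"
  proof (rule eq_vecI)
    fix i assume "i < dim_vec (\<mu> \<cdot>\<^sub>v w)"
    hence i: "i < n" unfolding w_def by simp
    have gi: "g i \<in> S" using g i unfolding bij_betw_def by auto
    have "(?A *\<^sub>v w) $ i = (\<Sum>j<n. M (g i) (g j) * v (g j))"
      using i unfolding w_def by (simp add: scalar_prod_def atLeast0LessThan)
    also have "\<dots> = (\<Sum>y\<in>S. M (g i) y * v y)"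
      using sum.reindex_bij_betw[OF g] by (simp add: atLeast0LessThan)
    also have "\<dots> = \<mu> * v (g i)" using eq gi by simp
    finally show "(?A *\<^sub>v w) $ i = (\<mu> \<cdot>\<^sub>v w) $ i" using i unfolding w_def by simp
  qed (simp add: w_def)
  moreover have "w \<in> carrier_vec n" unfolding w_def by simp
  ultimately show ?thesis unfolding eigenvalue_def eigenvector_def by auto
qed

lemma is_eigenvalue_on_of_eigenvalue:
  fixes M :: "'a \<Rightarrow> 'a \<Rightarrow> real"
  assumes g: "bij_betw g {0..<n} S" and ev: "eigenvalue (mat n n (\<lambda>(i,j). M (g i) (g j))) \<mu>"
  shows "is_eigenvalue_on S M \<mu>"
proof -
  let ?A = "mat n n (\<lambda>(i,j). M (g i) (g j))"
  obtain w where w: "w \<in> carrier_vec n" "w \<noteq> 0\<^sub>v n" "?A *\<^sub>v w = \<mu> \<cdot>\<^sub>v w"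
    using ev unfolding eigenvalue_def eigenvector_def by auto
  define v where "v = (\<lambda>x. w $ (the_inv_into {0..<n} g x))"
  have vg: "v (g j) = w $ j" if "j < n" for j
    using that g unfolding v_def bij_betw_def by (simp add: the_inv_into_f_f)
  obtain i where i: "i < n" "w $ i \<noteq> 0"
    using w(1,2) by (metis carrier_vecD eq_vecI index_zero_vec)
  have "\<exists>x\<in>S. v x \<noteq> 0" using i vg g unfolding bij_betw_def by force
  moreover have "(\<Sum>y\<in>S. M x y * v y) = \<mu> * v x" if "x \<in> S" for x
  proof -
    obtain i where i: "i < n" "g i = x" using g \<open>x \<in> S\<close> unfolding bij_betw_def by auto
    have "(\<Sum>y\<in>S. M x y * v y) = (\<Sum>j<n. M (g i) (g j) * w $ j)"
      using sum.reindex_bij_betw[OF g, of "\<lambda>y. M x y * v y"] i vg by (simp add: atLeast0LessThan)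
    also have "\<dots> = (?A *\<^sub>v w) $ i" using i w(1) by (simp add: scalar_prod_def atLeast0LessThan)
    also have "\<dots> = \<mu> * w $ i" using w(1,3) i by simp
    also have "\<dots> = \<mu> * v x" using vg[OF i(1)] i(2) by simp
    finally show ?thesis .
  qed
  ultimately show ?thesis unfolding is_eigenvalue_on_def by blast
qed

lemma is_eigenvalue_on_iff_eigenvalue:
  fixes M :: "'a \<Rightarrow> 'a \<Rightarrow> real"
  assumes "bij_betw g {0..<n} S"
  shows "is_eigenvalue_on S M \<mu> \<longleftrightarrow> eigenvalue (mat n n (\<lambda>(i,j). M (g i) (g j))) \<mu>"
  using eigenvalue_of_is_eigenvalue_on is_eigenvalue_on_of_eigenvalue assms by blast

text \<open>A real symmetric matrix, seen as a complex matrix, has only real eigenvalues: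
  the Hermitian form of an eigenvector is both real and l times a positive real.\<close>

lemma real_symmetric_eigenvalue_real:
  fixes A :: "real mat" and v :: "complex vec"
  assumes A: "A \<in> carrier_mat n n"
    and sym: "\<And>i j. i < n \<Longrightarrow> j < n \<Longrightarrow> A $$ (i,j) = A $$ (j,i)"
    and ev: "eigenvector (map_mat complex_of_real A) v l"
  shows "Im l = 0"
proof -
  let ?C = "map_mat complex_of_real A"
  from ev A have v: "v \<in> carrier_vec n" "v \<noteq> 0\<^sub>v n" "?C *\<^sub>v v = l \<cdot>\<^sub>v v"
    unfolding eigenvector_def by auto
  have row: "(\<Sum>j<n. of_real (A $$ (i,j)) * v $ j) = l * v $ i" if "i < n" for i
  proof -
    have "(?C *\<^sub>v v) $ i = (\<Sum>j<n. of_real (A $$ (i,j)) * v $ j)"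
      using that A v(1) by (simp add: scalar_prod_def atLeast0LessThan)
    thus ?thesis using v(3) that v(1) by simp
  qed
  define s where "s = (\<Sum>i<n. \<Sum>j<n. cnj (v $ i) * of_real (A $$ (i,j)) * v $ j)"
  define N where "N = (\<Sum>i<n. (cmod (v $ i))^2)"
  have s_eq: "s = l * of_real N"
  proof -
    have "s = (\<Sum>i<n. cnj (v $ i) * (\<Sum>j<n. of_real (A $$ (i,j)) * v $ j))"
      unfolding s_def by (simp add: sum_distrib_left mult.assoc)
    also have "\<dots> = (\<Sum>i<n. l * (cnj (v $ i) * v $ i))" using row by (simp add: ac_simps)
    also have "\<dots> = l * of_real N" unfolding N_def of_real_sum sum_distrib_left
      by (intro sum.cong refl) (metis complex_norm_square mult.commute)
    finally show ?thesis .
  qed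
  have "cnj s = (\<Sum>i<n. \<Sum>j<n. v $ i * of_real (A $$ (i,j)) * cnj (v $ j))"
    unfolding s_def by (simp add: cnj_sum)
  also have "\<dots> = (\<Sum>j<n. \<Sum>i<n. v $ i * of_real (A $$ (i,j)) * cnj (v $ j))"
    by (rule sum.swap)
  also have "\<dots> = s" unfolding s_def by (intro sum.cong refl) (simp add: sym ac_simps)
  finally have "Im s = 0" by (metis cnj.sel(2) equation_minus_iff neg_equal_zero)
  obtain i where i: "i < n" "v $ i \<noteq> 0"
    using v(1,2) by (metis carrier_vecD eq_vecI index_zero_vec)
  have "N > 0" unfolding N_def by (rule sum_pos2[of _ i]) (use i in auto)
  with \<open>Im s = 0\<close> s_eq show ?thesis by simp
qed

text \<open>Hence a non-empty real symmetric matrix has a real eigenvalue: take a complex root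
  of the characteristic polynomial; it is real and a root of the real polynomial.\<close>

lemma real_symmetric_has_eigenvalue:
  fixes A :: "real mat"
  assumes A: "A \<in> carrier_mat n n" and n: "n > 0"
    and sym: "\<And>i j. i < n \<Longrightarrow> j < n \<Longrightarrow> A $$ (i,j) = A $$ (j,i)"
  shows "spectrum A \<noteq> {}"
proof -
  let ?C = "map_mat complex_of_real A"
  have C: "?C \<in> carrier_mat n n" using A by simp
  obtain l where l: "eigenvalue ?C l" using spectrum_non_empty[OF C n] unfolding spectrum_def by auto
  then obtain v where "eigenvector ?C v l" unfolding eigenvalue_def by auto
  hence real: "complex_of_real (Re l) = l"
    using real_symmetric_eigenvalue_real[OF A sym] by (simp add: complex_eq_iff)
  have "complex_of_real (poly (char_poly A) (Re l))
      = poly (map_poly of_real (char_poly A)) (of_real (Re l))"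
    by (rule of_real_hom.poly_map_poly[symmetric])
  also have "\<dots> = poly (char_poly ?C) l" using real by (simp add: of_real_hom.char_poly_hom[OF A])
  also have "\<dots> = 0" using l eigenvalue_root_char_poly[OF C] by simp
  finally have "Re l \<in> spectrum A" using spectrum_root_char_poly[OF A] by simp
  thus ?thesis by blast
qed

text \<open>For a symmetric kernel on a finite non-empty set the eigenvalues form a finite
  non-empty set, so Min over them (as in lambda_min) is meaningful.\<close>

lemma symmetric_eigenvalues_finite_nonempty:
  fixes M :: "'a \<Rightarrow> 'a \<Rightarrow> real"
  assumes fin: "finite S" and ne: "S \<noteq> {}" and sym: "\<forall>x\<in>S. \<forall>y\<in>S. M x y = M y x"
  shows "finite {\<mu>. is_eigenvalue_on S M \<mu>} \<and> {\<mu>. is_eigenvalue_on S M \<mu>} \<noteq> {}"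
proof -
  obtain g where g: "bij_betw g {0..<card S} S" using ex_bij_betw_nat_finite[OF fin] by blast
  define A where "A = mat (card S) (card S) (\<lambda>(i,j). M (g i) (g j))"
  have A: "A \<in> carrier_mat (card S) (card S)" unfolding A_def by simp
  have eq: "{\<mu>. is_eigenvalue_on S M \<mu>} = spectrum A"
    unfolding spectrum_def A_def using is_eigenvalue_on_iff_eigenvalue[OF g] by auto
  have "A $$ (i,j) = A $$ (j,i)" if "i < card S" "j < card S" for i j
    using that sym bij_betw_apply[OF g, of i] bij_betw_apply[OF g, of j] unfolding A_def by simp
  hence "spectrum A \<noteq> {}"
    using real_symmetric_has_eigenvalue[OF A] fin ne by (simp add: card_gt_0_iff)
  thus ?thesis using eq card_finite_spectrum[OF A] by auto
qed

definition bform :: "'a hgraph \<Rightarrow> ('a \<Rightarrow> real) \<Rightarrow> real" where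
  "bform K v = (\<Sum>x\<in>slim K. \<Sum>y\<in>slim K. Bmat K x y * v x * v y)"

definition sqnorm :: "'a hgraph \<Rightarrow> ('a \<Rightarrow> real) \<Rightarrow> real" where
  "sqnorm K v = (\<Sum>x\<in>slim K. (v x)^2)"

lemma hoffman_graph_finite_slim: "hoffman_graph K \<Longrightarrow> finite (slim K)"
  unfolding hoffman_graph_def slim_def by auto

lemma lambda_min_ge_of_form_bound:
  assumes K: "hoffman_graph K" and ne: "slim K \<noteq> {}"
    and bound: "\<forall>v. bform K v \<ge> \<alpha> * sqnorm K v"
  shows "lambda_min K \<ge> \<alpha>"
proof -
  have fin: "finite (slim K)" using hoffman_graph_finite_slim[OF K] .
  have sym: "\<forall>x\<in>slim K. \<forall>y\<in>slim K. Bmat K x y = Bmat K y x"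
    using K unfolding Bmat_def hoffman_graph_def by (auto simp: Int_commute)
  have "\<alpha> \<le> \<mu>" if "is_eigenvalue_on (slim K) (Bmat K) \<mu>" for \<mu>
  proof -
    from that obtain v where v0: "\<exists>x\<in>slim K. v x \<noteq> 0"
      and ev: "\<forall>x\<in>slim K. (\<Sum>y\<in>slim K. Bmat K x y * v y) = \<mu> * v x"
      unfolding is_eigenvalue_on_def by blast
    have "bform K v = (\<Sum>x\<in>slim K. v x * (\<Sum>y\<in>slim K. Bmat K x y * v y))"
      unfolding bform_def by (simp add: sum_distrib_left ac_simps)
    also have "\<dots> = \<mu> * sqnorm K v"
      using ev unfolding sqnorm_def by (simp add: sum_distrib_left power2_eq_square ac_simps)
    finally have "bform K v = \<mu> * sqnorm K v" .
    moreover have "\<alpha> * sqnorm K v \<le> bform K v" using bound by blast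
    ultimately have "\<alpha> * sqnorm K v \<le> \<mu> * sqnorm K v" by simp
    moreover have "sqnorm K v > 0" unfolding sqnorm_def
      using v0 fin by (metis sum_pos2 power2_less_eq_zero_iff zero_le_power2 not_le)
    ultimately show ?thesis by simp
  qed
  thus ?thesis unfolding lambda_min_def
    using symmetric_eigenvalues_finite_nonempty[OF fin ne sym] by (simp add: Min_ge_iff)
qed

definition induced_on :: "'a hgraph \<Rightarrow> 'a set \<Rightarrow> 'a hgraph" where
  "induced_on G V =
     \<lparr>hverts = V, hfat = hfat G \<inter> V, hadj = (\<lambda>x y. x \<in> V \<and> y \<in> V \<and> hadj G x y)\<rparr>"

lemma induced_on_simps [simp]:
  "hverts (induced_on G V) = V"
  "hfat (induced_on G V) = hfat G \<inter> V"
  "hadj (induced_on G V) x y \<longleftrightarrow> x \<in> V \<and> y \<in> V \<and> hadj G x y"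
  by (auto simp: induced_on_def)

lemma slim_induced_on: "slim (induced_on G V) = V - hfat G"
  by (auto simp: slim_def)

lemma induced_hsub_induced_on:
  assumes G: "hoffman_graph G" and V: "V \<subseteq> hverts G"
    and fat_slim: "\<forall>f\<in>hfat G \<inter> V. \<exists>x\<in>V - hfat G. hadj G f x"
  shows "induced_hsub (induced_on G V) G"
proof -
  have "finite V" using G V finite_subset unfolding hoffman_graph_def by blast
  hence "hoffman_graph (induced_on G V)"
    using G fat_slim unfolding hoffman_graph_def slim_def by auto
  thus ?thesis using V unfolding induced_hsub_def by auto
qed

lemma slim_induced_hsub: "induced_hsub K G \<Longrightarrow> slim K = hverts K - hfat G"
  unfolding induced_hsub_def slim_def by auto

lemma slim_subset_induced_hsub: "induced_hsub K G \<Longrightarrow> slim K \<subseteq> slim G"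
  unfolding induced_hsub_def slim_def by auto

definition keeps_fat_nbrs :: "'a hgraph \<Rightarrow> 'a hgraph \<Rightarrow> bool" where
  "keeps_fat_nbrs K G \<longleftrightarrow> (\<forall>x\<in>slim K. \<forall>y\<in>hfat G. hadj G x y \<longrightarrow> y \<in> hverts K)"

lemma Bmat_induced_hsub:
  assumes KG: "induced_hsub K G" and keep: "keeps_fat_nbrs K G"
    and xy: "x \<in> slim K" "y \<in> slim K"
  shows "Bmat K x y = Bmat G x y"
proof -
  have fat: "fat_nbrs K z = fat_nbrs G z" if z: "z \<in> slim K" for z
  proof -
    have "\<forall>y\<in>hfat G. hadj G z y \<longrightarrow> y \<in> hverts K" using keep z unfolding keeps_fat_nbrs_def by blast
    thus ?thesis using KG z unfolding fat_nbrs_def induced_hsub_def slim_def by auto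
  qed
  have "hadj K x y = hadj G x y" using KG xy unfolding induced_hsub_def slim_def by blast
  thus ?thesis using fat xy unfolding Bmat_def by simp
qed

text \<open>Such a K inherits lower bounds on the quadratic form: extend a vector on slim K by
  zero to slim G.\<close>

lemma form_bound_induced_hsub:
  assumes KG: "induced_hsub K G" and G: "hoffman_graph G" and keep: "keeps_fat_nbrs K G"
    and bound: "\<forall>v. bform G v \<ge> \<alpha> * sqnorm G v"
  shows "\<forall>v. bform K v \<ge> \<alpha> * sqnorm K v"
proof
  fix v
  define w :: "'a \<Rightarrow> real" where "w x = (if x \<in> slim K then v x else 0)" for x
  have sub: "slim K \<subseteq> slim G" using slim_subset_induced_hsub[OF KG] .
  have fin: "finite (slim G)" using hoffman_graph_finite_slim[OF G] .
  have "bform G w = (\<Sum>x\<in>slim K. \<Sum>y\<in>slim G. Bmat G x y * w x * w y)"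
    unfolding bform_def by (rule sum.mono_neutral_right[OF fin sub]) (auto simp: w_def)
  also have "\<dots> = (\<Sum>x\<in>slim K. \<Sum>y\<in>slim K. Bmat G x y * w x * w y)"
    by (rule sum.cong[OF refl], rule sum.mono_neutral_right[OF fin sub]) (auto simp: w_def)
  also have "\<dots> = bform K v" unfolding bform_def
    by (intro sum.cong refl) (auto simp: w_def Bmat_induced_hsub[OF KG keep])
  finally have "bform G w = bform K v" .
  moreover have "sqnorm G w = sqnorm K v" unfolding sqnorm_def
    by (rule sum.mono_neutral_cong_right[OF fin sub]) (auto simp: w_def)
  moreover have "bform G w \<ge> \<alpha> * sqnorm G w" using bound by blast
  ultimately show "bform K v \<ge> \<alpha> * sqnorm K v" by simp
qed

section \<open>Decompositions\<close>

lemma decompositionD: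
  assumes "decomposition G I Hs"
  shows "\<And>i. i \<in> I \<Longrightarrow> induced_hsub (Hs i) G"
    and "hverts G = (\<Union>i \<in> I. hverts (Hs i))"
    and "\<And>i j. i \<in> I \<Longrightarrow> j \<in> I \<Longrightarrow> i \<noteq> j \<Longrightarrow> slim (Hs i) \<inter> slim (Hs j) = {}"
    and "\<And>i. i \<in> I \<Longrightarrow> keeps_fat_nbrs (Hs i) G"
    and "\<And>i j x y. i \<in> I \<Longrightarrow> j \<in> I \<Longrightarrow> i \<noteq> j \<Longrightarrow> x \<in> slim (Hs i) \<Longrightarrow> y \<in> slim (Hs j) \<Longrightarrow>
           card (fat_nbrs G x \<inter> fat_nbrs G y) \<le> 1 \<and>
           (card (fat_nbrs G x \<inter> fat_nbrs G y) = 1 \<longleftrightarrow> hadj G x y)"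
  using assms unfolding decomposition_def keeps_fat_nbrs_def by simp_all

lemma decomposition_slim:
  assumes D: "decomposition G I Hs"
  shows "slim G = (\<Union>i\<in>I. slim (Hs i))"
proof
  show "(\<Union>i\<in>I. slim (Hs i)) \<subseteq> slim G"
    using decompositionD(1)[OF D] slim_subset_induced_hsub by blast
  show "slim G \<subseteq> (\<Union>i\<in>I. slim (Hs i))"
  proof
    fix x assume x: "x \<in> slim G"
    then obtain i where i: "i \<in> I" "x \<in> hverts (Hs i)"
      using decompositionD(2)[OF D] unfolding slim_def by auto
    hence "x \<in> slim (Hs i)"
      using x slim_induced_hsub[OF decompositionD(1)[OF D i(1)]] unfolding slim_def by auto
    thus "x \<in> (\<Union>i\<in>I. slim (Hs i))" using i(1) by blast
  qed
qed

text \<open>Condition (iv) says precisely that B(G) vanishes between slim vertices of different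
  members; hence B(G) is block diagonal and its form is the sum of the forms of the members.\<close>

lemma decomposition_Bmat_cross:
  assumes D: "decomposition G I Hs" and ij: "i \<in> I" "j \<in> I" "i \<noteq> j"
    and x: "x \<in> slim (Hs i)" and y: "y \<in> slim (Hs j)"
  shows "Bmat G x y = 0"
  using decompositionD(5)[OF D ij x y] unfolding Bmat_def by auto

lemma decomposition_sum:
  assumes D: "decomposition G I Hs" and I: "finite I" and G: "hoffman_graph G"
  shows "sum h (slim G) = (\<Sum>i\<in>I. sum h (slim (Hs i)))"
proof -
  have fin: "finite (slim (Hs i))" if "i \<in> I" for i
    using finite_subset[OF slim_subset_induced_hsub[OF decompositionD(1)[OF D that]]
        hoffman_graph_finite_slim[OF G]] .
  show ?thesis unfolding decomposition_slim[OF D]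
    using fin decompositionD(3)[OF D] by (intro sum.UNION_disjoint[OF I]) auto
qed

lemma decomposition_bform:
  assumes D: "decomposition G I Hs" and I: "finite I" and G: "hoffman_graph G"
  shows "bform G v = (\<Sum>i\<in>I. bform (Hs i) v)"
proof -
  have row: "(\<Sum>y\<in>slim G. Bmat G x y * v x * v y) = (\<Sum>y\<in>slim (Hs i). Bmat (Hs i) x y * v x * v y)"
    if i: "i \<in> I" and x: "x \<in> slim (Hs i)" for i x
  proof -
    have "(\<Sum>y\<in>slim G. Bmat G x y * v x * v y) = (\<Sum>j\<in>I. \<Sum>y\<in>slim (Hs j). Bmat G x y * v x * v y)"
      by (rule decomposition_sum[OF D I G])
    also have "\<dots> = (\<Sum>j\<in>{i}. \<Sum>y\<in>slim (Hs j). Bmat G x y * v x * v y)"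
    proof (rule sum.mono_neutral_right[OF I])
      show "{i} \<subseteq> I" using i by simp
      show "\<forall>j\<in>I - {i}. (\<Sum>y\<in>slim (Hs j). Bmat G x y * v x * v y) = 0"
        using decomposition_Bmat_cross[OF D i _ _ x] by (auto intro!: sum.neutral)
    qed
    also have "\<dots> = (\<Sum>y\<in>slim (Hs i). Bmat (Hs i) x y * v x * v y)"
      using Bmat_induced_hsub[OF decompositionD(1,4)[OF D i] x] by simp
    finally show ?thesis .
  qed
  have "bform G v = (\<Sum>i\<in>I. \<Sum>x\<in>slim (Hs i). \<Sum>y\<in>slim G. Bmat G x y * v x * v y)"
    unfolding bform_def by (rule decomposition_sum[OF D I G])
  also have "\<dots> = (\<Sum>i\<in>I. bform (Hs i) v)" unfolding bform_def using row by simp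
  finally show ?thesis .
qed

lemma decomposition_form_bound:
  assumes D: "decomposition G I Hs" and I: "finite I" and G: "hoffman_graph G"
    and bound: "\<And>i v. i \<in> I \<Longrightarrow> bform (Hs i) v \<ge> \<alpha> * sqnorm (Hs i) v"
  shows "bform G v \<ge> \<alpha> * sqnorm G v"
proof -
  have "\<alpha> * sqnorm G v = (\<Sum>i\<in>I. \<alpha> * sqnorm (Hs i) v)"
    unfolding sqnorm_def sum_distrib_left[symmetric]
    using decomposition_sum[OF D I G, of "\<lambda>x. (v x)^2"] by simp
  also have "\<dots> \<le> (\<Sum>i\<in>I. bform (Hs i) v)" by (intro sum_mono bound)
  also have "\<dots> = bform G v" by (rule decomposition_bform[OF D I G, symmetric])
  finally show ?thesis .
qed

definition merge :: "'a hgraph \<Rightarrow> ('i \<Rightarrow> 'a hgraph) \<Rightarrow> 'i set \<Rightarrow> 'a hgraph" where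
  "merge G Hs J = induced_on G (\<Union>i\<in>J. hverts (Hs i))"

lemma slim_merge:
  assumes D: "decomposition G I Hs" and J: "J \<subseteq> I"
  shows "slim (merge G Hs J) = (\<Union>i\<in>J. slim (Hs i))"
  unfolding merge_def slim_induced_on using slim_induced_hsub[OF decompositionD(1)[OF D]] J by auto

lemma induced_hsub_merge:
  assumes D: "decomposition G I Hs" and G: "hoffman_graph G" and J: "J \<subseteq> I"
  shows "induced_hsub (merge G Hs J) G"
  unfolding merge_def
proof (rule induced_hsub_induced_on[OF G])
  show "(\<Union>i\<in>J. hverts (Hs i)) \<subseteq> hverts G" using decompositionD(2)[OF D] J by blast
  show "\<forall>f\<in>hfat G \<inter> (\<Union>i\<in>J. hverts (Hs i)). \<exists>x\<in>(\<Union>i\<in>J. hverts (Hs i)) - hfat G. hadj G f x"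
  proof
    fix f assume f: "f \<in> hfat G \<inter> (\<Union>i\<in>J. hverts (Hs i))"
    then obtain i where i: "i \<in> J" "f \<in> hverts (Hs i)" by blast
    have sub: "induced_hsub (Hs i) G" using decompositionD(1)[OF D] i J by blast
    hence "f \<in> hfat (Hs i)" "hoffman_graph (Hs i)" using f i unfolding induced_hsub_def by auto
    then obtain x where "x \<in> slim (Hs i)" "hadj (Hs i) f x" unfolding hoffman_graph_def by blast
    thus "\<exists>x\<in>(\<Union>i\<in>J. hverts (Hs i)) - hfat G. hadj G f x"
      using i sub slim_induced_hsub[OF sub] unfolding induced_hsub_def by blast
  qed
qed

lemma keeps_fat_nbrs_merge:
  assumes D: "decomposition G I Hs" and J: "J \<subseteq> I"
  shows "keeps_fat_nbrs (merge G Hs J) G"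
  using decompositionD(4)[OF D] J slim_merge[OF D J]
  unfolding keeps_fat_nbrs_def merge_def by fastforce

lemma merge_cross:
  assumes D: "decomposition G I Hs" and J: "J1 \<subseteq> I" "J2 \<subseteq> I" "J1 \<inter> J2 = {}"
    and xy: "x \<in> slim (merge G Hs J1)" "y \<in> slim (merge G Hs J2)"
  obtains i j where "i \<in> I" "j \<in> I" "i \<noteq> j" "x \<in> slim (Hs i)" "y \<in> slim (Hs j)"
  using that xy J unfolding slim_merge[OF D J(1)] slim_merge[OF D J(2)] by blast

lemma decomposition_merge_two:
  assumes D: "decomposition G I Hs" and G: "hoffman_graph G"
    and partition: "I1 \<union> I2 = I" "I1 \<inter> I2 = {}"
  shows "decomposition G {1::nat, 2} (\<lambda>k. merge G Hs (if k = 1 then I1 else I2))"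
proof -
  let ?J = "\<lambda>k::nat. if k = 1 then I1 else I2"
  have J: "?J k \<subseteq> I" for k using partition by auto
  have disj: "?J k \<inter> ?J l = {}" if "k \<in> {1,2}" "l \<in> {1,2}" "k \<noteq> l" for k l
    using that partition(2) by auto
  have parts: "induced_hsub (merge G Hs (?J k)) G" "keeps_fat_nbrs (merge G Hs (?J k)) G" for k
    using induced_hsub_merge[OF D G J] keeps_fat_nbrs_merge[OF D J] .
  have covers: "hverts G = (\<Union>k\<in>{1,2}. hverts (merge G Hs (?J k)))"
    using decompositionD(2)[OF D] partition(1) unfolding merge_def by auto
  show ?thesis
    unfolding decomposition_def
  proof (intro conjI)
    show "\<forall>k\<in>{1::nat,2}. induced_hsub (merge G Hs (?J k)) G" using parts(1) by blast
    show "hverts G = (\<Union>k\<in>{1,2}. hverts (merge G Hs (?J k)))" by (rule covers)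
    show "\<forall>k\<in>{1::nat,2}. \<forall>x\<in>slim (merge G Hs (?J k)). \<forall>y\<in>hfat G.
            hadj G x y \<longrightarrow> y \<in> hverts (merge G Hs (?J k))"
      using parts(2) unfolding keeps_fat_nbrs_def by blast
    show "\<forall>k\<in>{1::nat,2}. \<forall>l\<in>{1,2}. k \<noteq> l \<longrightarrow>
            slim (merge G Hs (?J k)) \<inter> slim (merge G Hs (?J l)) = {}"
    proof (intro ballI impI equals0I)
      fix k l z assume "k \<in> {1::nat,2}" "l \<in> {1::nat,2}" "k \<noteq> l"
        and "z \<in> slim (merge G Hs (?J k)) \<inter> slim (merge G Hs (?J l))"
      then obtain i j where "i \<in> I" "j \<in> I" "i \<noteq> j" "z \<in> slim (Hs i)" "z \<in> slim (Hs j)"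
        using merge_cross[OF D J J disj] by blast
      thus False using decompositionD(3)[OF D] by blast
    qed
    show "\<forall>k\<in>{1::nat,2}. \<forall>l\<in>{1,2}. k \<noteq> l \<longrightarrow>
            (\<forall>x\<in>slim (merge G Hs (?J k)). \<forall>y\<in>slim (merge G Hs (?J l)).
              card (fat_nbrs G x \<inter> fat_nbrs G y) \<le> 1 \<and>
              (card (fat_nbrs G x \<inter> fat_nbrs G y) = 1 \<longleftrightarrow> hadj G x y))"
    proof (intro ballI impI)
      fix k l x y assume "k \<in> {1::nat,2}" "l \<in> {1::nat,2}" "k \<noteq> l"
        and "x \<in> slim (merge G Hs (?J k))" "y \<in> slim (merge G Hs (?J l))"
      then obtain i j where "i \<in> I" "j \<in> I" "i \<noteq> j" "x \<in> slim (Hs i)" "y \<in> slim (Hs j)"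
        using merge_cross[OF D J J disj] by blast
      thus "card (fat_nbrs G x \<inter> fat_nbrs G y) \<le> 1 \<and>
              (card (fat_nbrs G x \<inter> fat_nbrs G y) = 1 \<longleftrightarrow> hadj G x y)"
        by (rule decompositionD(5)[OF D])
    qed
  qed
qed

section \<open>The golden-ratio inequality\<close>

lemma golden_tau_sq: "golden_tau * golden_tau = golden_tau + 1"
proof -
  have "sqrt 5 * sqrt 5 = (5::real)" by simp
  thus ?thesis unfolding golden_tau_def by (simp add: field_simps)
qed

lemma golden_tau_ge_1: "golden_tau \<ge> 1"
  unfolding golden_tau_def by simp

text \<open>The 2x2 matrices [[-2, s], [s, -1]] with s = 1 or -1 (the B-matrices of H_XVI and
  H_XVII) have smallest eigenvalue -1-tau, i.e. their forms are >= (-1-tau)|v|^2.  Indeed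
  tau times the difference is the square (a + s tau b)^2.\<close>

lemma golden_two_by_two_bound:
  fixes a b s :: real
  assumes s: "s * s = 1"
  shows "-2*a^2 + 2*s*a*b - b^2 \<ge> (-1 - golden_tau) * (a^2 + b^2)"
proof -
  define t where "t = golden_tau"
  have t2: "t * t = t + 1" and t1: "t \<ge> 1" unfolding t_def using golden_tau_sq golden_tau_ge_1 by auto
  define D where "D = (t - 1)*a^2 + 2*s*a*b + t*b^2"
  have "t * D = t*t*a^2 - t*a^2 + 2*s*t*a*b + t*t*b^2" unfolding D_def by (simp add: algebra_simps)
  also have "\<dots> = a^2 + 2*s*t*a*b + (s*s)*(t*t)*b^2" unfolding s t2 by (simp add: algebra_simps)
  also have "\<dots> = (a + s*t*b)^2" by (simp add: power2_eq_square algebra_simps)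
  finally have "t * D \<ge> 0" by simp
  hence "D \<ge> 0" using t1 by (simp add: zero_le_mult_iff)
  thus ?thesis unfolding D_def t_def by (simp add: algebra_simps)
qed

section \<open>The extended graph and its decomposition\<close>

text \<open>Setting of the construction: g enumerates the slim vertices of H along an isomorphism
  S(H) ~ Q_{p,q,r} (so g 0..g (r-1) is V_r, and g (r+k) is matched to g k by sigma or rho),
  and F is a vertex not in H, to become the new fat vertex.\<close>

locale Q_indexed =
  fixes H :: "'a hgraph" and p q r :: nat and g :: "nat \<Rightarrow> 'a" and F :: 'a
  assumes hg: "hoffman_graph H"
    and one_fat: "\<forall>x\<in>slim H. card (fat_nbrs H x) = 1"
    and pqr: "p + q \<le> r" and r_pos: "0 < r"
    and g_bij: "bij_betw g {0..<r+p+q} (slim H)"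
    and g_pos: "\<And>a b. a < r+p+q \<Longrightarrow> b < r+p+q \<Longrightarrow>
        spos (special_graph H) (g a) (g b) = spos (Qgraph p q r) a b"
    and g_neg: "\<And>a b. a < r+p+q \<Longrightarrow> b < r+p+q \<Longrightarrow>
        sneg (special_graph H) (g a) (g b) = sneg (Qgraph p q r) a b"
    and F_new: "F \<notin> hverts H"
begin

abbreviation n where "n \<equiv> r+p+q"

lemma g_slim: "a < n \<Longrightarrow> g a \<in> slim H"
  using g_bij by (auto dest: bij_betw_apply)

lemma g_eq_iff: "a < n \<Longrightarrow> b < n \<Longrightarrow> g a = g b \<longleftrightarrow> a = b"
  using bij_betw_imp_inj_on[OF g_bij] by (auto simp: inj_on_eq_iff)

lemma slim_enum: "x \<in> slim H \<Longrightarrow> \<exists>a<n. x = g a"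
  using bij_betw_imp_surj_on[OF g_bij] by force

lemma H_sym: "hadj H x y \<Longrightarrow> hadj H y x" using hg unfolding hoffman_graph_def by blast
lemma H_irrefl: "\<not> hadj H x x" using hg unfolding hoffman_graph_def by blast
lemma H_adj_verts: "hadj H x y \<Longrightarrow> x \<in> hverts H \<and> y \<in> hverts H"
  using hg unfolding hoffman_graph_def by blast
lemma H_fat_indep: "x \<in> hfat H \<Longrightarrow> y \<in> hfat H \<Longrightarrow> \<not> hadj H x y"
  using hg unfolding hoffman_graph_def by blast
lemma H_fat_verts: "hfat H \<subseteq> hverts H" using hg unfolding hoffman_graph_def by blast
lemma H_fat_slim_nbr: "f \<in> hfat H \<Longrightarrow> \<exists>x\<in>slim H. hadj H f x"
  using hg unfolding hoffman_graph_def by blast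
lemma slimD: "x \<in> slim H \<Longrightarrow> x \<in> hverts H \<and> x \<notin> hfat H" unfolding slim_def by blast

definition fat_of :: "'a \<Rightarrow> 'a" where "fat_of x = the_elem (fat_nbrs H x)"

lemma fat_nbrs_fat_of:
  assumes "x \<in> slim H" shows "fat_nbrs H x = {fat_of x}"
proof -
  obtain y where "fat_nbrs H x = {y}" using one_fat assms card_1_singletonE by blast
  thus ?thesis unfolding fat_of_def by simp
qed

lemma fat_of_fat: "x \<in> slim H \<Longrightarrow> fat_of x \<in> hfat H"
  using fat_nbrs_fat_of unfolding fat_nbrs_def by blast
lemma adj_fat_of: "x \<in> slim H \<Longrightarrow> hadj H x (fat_of x)"
  using fat_nbrs_fat_of unfolding fat_nbrs_def by blast
lemma fat_of_unique: "x \<in> slim H \<Longrightarrow> y \<in> hfat H \<Longrightarrow> hadj H x y \<Longrightarrow> y = fat_of x"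
  using fat_nbrs_fat_of unfolding fat_nbrs_def by blast
lemma not_adj_other_fat:
  "x \<in> slim H \<Longrightarrow> y \<in> hfat H \<Longrightarrow> y \<noteq> fat_of x \<Longrightarrow> \<not> hadj H x y \<and> \<not> hadj H y x"
  using fat_of_unique H_sym by blast

lemma F_not_fat: "F \<notin> hfat H" using F_new H_fat_verts by blast
lemma F_not_slim: "F \<notin> slim H" using F_new slimD by blast
lemma F_not_adj: "\<not> hadj H F z" "\<not> hadj H z F" using F_new H_adj_verts by blast+
lemma fat_of_not_F: "x \<in> slim H \<Longrightarrow> fat_of x \<noteq> F" using fat_of_fat F_not_fat by blast

lemma Q_pos_iff: "a < n \<Longrightarrow> b < n \<Longrightarrow>
    spos (Qgraph p q r) a b \<longleftrightarrow> a \<noteq> b \<and> hadj H (g a) (g b) \<and> fat_of (g a) \<noteq> fat_of (g b)"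
  using g_pos[of a b, symmetric] g_slim[of a] g_slim[of b] g_eq_iff[of a b]
    fat_nbrs_fat_of[of "g a"] fat_nbrs_fat_of[of "g b"]
  unfolding special_graph_def by auto

lemma Q_neg_iff: "a < n \<Longrightarrow> b < n \<Longrightarrow>
    sneg (Qgraph p q r) a b \<longleftrightarrow> a \<noteq> b \<and> \<not> hadj H (g a) (g b) \<and> fat_of (g a) = fat_of (g b)"
  using g_neg[of a b, symmetric] g_slim[of a] g_slim[of b] g_eq_iff[of a b]
    fat_nbrs_fat_of[of "g a"] fat_nbrs_fat_of[of "g b"]
  unfolding special_graph_def by auto

lemma core_pair: "a < r \<Longrightarrow> b < r \<Longrightarrow> a \<noteq> b \<Longrightarrow> hadj H (g a) (g b) \<and> fat_of (g a) \<noteq> fat_of (g b)"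
  using Q_pos_iff[of a b] by (simp add: Qgraph_def)

lemma sigma_pair: "k < p \<Longrightarrow> hadj H (g k) (g (r+k)) \<and> fat_of (g k) \<noteq> fat_of (g (r+k))"
  using Q_pos_iff[of k "r+k"] pqr r_pos by (simp add: Qgraph_def)

lemma rho_pair: "p \<le> k \<Longrightarrow> k < p+q \<Longrightarrow> \<not> hadj H (g k) (g (r+k)) \<and> fat_of (g k) = fat_of (g (r+k))"
  using Q_neg_iff[of k "r+k"] pqr r_pos by (simp add: Qgraph_def)

text \<open>Index of the piece containing g a: a itself on V_r, the matched index otherwise.\<close>

definition piece_of :: "nat \<Rightarrow> nat" where "piece_of a = (if a < r then a else a - r)"

lemma unrelated_pair:
  assumes ab: "a < n" "b < n" "a \<noteq> b" "piece_of a \<noteq> piece_of b" "\<not> (a < r \<and> b < r)"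
  shows "hadj H (g a) (g b) \<longleftrightarrow> fat_of (g a) = fat_of (g b)"
proof -
  have "\<not> spos (Qgraph p q r) a b" "\<not> sneg (Qgraph p q r) a b"
    using ab pqr unfolding Qgraph_def piece_of_def by (auto split: if_splits)
  thus ?thesis using Q_pos_iff[OF ab(1,2)] Q_neg_iff[OF ab(1,2)] ab(3) by blast
qed

definition core :: "'a set" where "core = g ` {0..<r}"

lemma g_in_core_iff: "a < n \<Longrightarrow> g a \<in> core \<longleftrightarrow> a < r"
  unfolding core_def using g_eq_iff by auto

lemma core_slim: "core \<subseteq> slim H" unfolding core_def using g_slim by auto

definition Hext :: "'a hgraph" where
  "Hext = \<lparr>hverts = insert F (hverts H), hfat = insert F (hfat H),
           hadj = (\<lambda>x y. hadj H x y \<or> (x = F \<and> y \<in> core) \<or> (y = F \<and> x \<in> core))\<rparr>"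

lemma Hext_simps [simp]:
  "hverts Hext = insert F (hverts H)" "hfat Hext = insert F (hfat H)"
  "hadj Hext x y \<longleftrightarrow> hadj H x y \<or> (x = F \<and> y \<in> core) \<or> (y = F \<and> x \<in> core)"
  unfolding Hext_def by simp_all

lemma slim_Hext: "slim Hext = slim H" unfolding slim_def using F_new by auto

lemma F_not_core: "F \<notin> core" using core_slim F_not_slim by blast
lemma fat_of_not_core: "x \<in> slim H \<Longrightarrow> fat_of x \<notin> core" using core_slim fat_of_fat slimD by blast

lemma fat_nbrs_Hext: "x \<in> slim H \<Longrightarrow> fat_nbrs Hext x = (if x \<in> core then {fat_of x, F} else {fat_of x})"
proof -
  assume x: "x \<in> slim H"
  hence "fat_nbrs Hext x = fat_nbrs H x \<union> (if x \<in> core then {F} else {})"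
    using F_not_slim F_not_adj unfolding fat_nbrs_def by auto
  thus ?thesis using fat_nbrs_fat_of[OF x] by auto
qed

lemma Hext_adj_slim: "x \<in> slim H \<Longrightarrow> y \<in> slim H \<Longrightarrow> hadj Hext x y \<longleftrightarrow> hadj H x y"
  using F_not_slim by auto

lemma hoffman_Hext: "hoffman_graph Hext"
proof -
  have "finite (hverts Hext)" using hg unfolding hoffman_graph_def by simp
  moreover have "hfat Hext \<subseteq> hverts Hext" using H_fat_verts by auto
  moreover have "\<forall>x y. hadj Hext x y \<longrightarrow> x \<in> hverts Hext \<and> y \<in> hverts Hext"
    using H_adj_verts core_slim slimD by auto
  moreover have "\<forall>x y. hadj Hext x y \<longrightarrow> hadj Hext y x" using H_sym by auto
  moreover have "\<forall>x. \<not> hadj Hext x x" using H_irrefl F_not_core by auto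
  moreover have "\<forall>f\<in>hfat Hext. \<exists>x\<in>slim Hext. hadj Hext f x"
  proof
    fix f assume "f \<in> hfat Hext"
    hence "f = F \<or> f \<in> hfat H" by simp
    moreover have "g 0 \<in> core" "g 0 \<in> slim H" using r_pos g_slim g_in_core_iff by auto
    hence "hadj Hext F (g 0)" "g 0 \<in> slim H" by auto
    ultimately show "\<exists>x\<in>slim Hext. hadj Hext f x"
      unfolding slim_Hext using H_fat_slim_nbr by auto
  qed
  moreover have "\<forall>f\<in>hfat Hext. \<forall>f'\<in>hfat Hext. \<not> hadj Hext f f'"
    using H_fat_indep F_not_adj F_not_core core_slim slimD by auto
  ultimately show ?thesis unfolding hoffman_graph_def by blast
qed

lemma induced_H_Hext: "induced_hsub H Hext"
  unfolding induced_hsub_def using hg F_new H_adj_verts F_not_adj H_fat_verts by auto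

definition piece_verts :: "nat \<Rightarrow> 'a set" where
  "piece_verts k = {g k, fat_of (g k), F} \<union>
     (if k < p+q then {g (r+k), fat_of (g (r+k))} else {})"

definition piece :: "nat \<Rightarrow> 'a hgraph" where "piece k = induced_on Hext (piece_verts k)"

lemma g_core: "k < r \<Longrightarrow> g k \<in> slim H \<and> g k \<in> core" using g_slim g_in_core_iff by auto
lemma g_matched: "k < p+q \<Longrightarrow> g (r+k) \<in> slim H \<and> g (r+k) \<notin> core"
  using g_slim g_in_core_iff by auto

lemma slim_piece: "k < r \<Longrightarrow> slim (piece k) = (if k < p+q then {g k, g (r+k)} else {g k})"
  unfolding piece_def slim_induced_on piece_verts_def
  using g_core[of k] g_matched[of k] slimD fat_of_fat F_not_slim by auto

lemma slim_piece_enum: "k < r \<Longrightarrow> x \<in> slim (piece k) \<Longrightarrow> \<exists>a<n. x = g a \<and> piece_of a = k"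
  using slim_piece[of k] unfolding piece_of_def
  by (auto split: if_splits intro: exI[of _ k] exI[of _ "r+k"])

lemma induced_piece: "k < r \<Longrightarrow> induced_hsub (piece k) Hext"
  unfolding piece_def
proof (rule induced_hsub_induced_on[OF hoffman_Hext])
  assume k: "k < r"
  show "piece_verts k \<subseteq> hverts Hext"
    unfolding piece_verts_def using g_core[OF k] g_matched[of k] slimD fat_of_fat H_fat_verts by auto
  have slim_nbrs: "hadj Hext (fat_of (g k)) (g k)" "hadj Hext F (g k)"
    "k < p+q \<Longrightarrow> hadj Hext (fat_of (g (r+k))) (g (r+k))"
    using adj_fat_of H_sym g_core[OF k] g_matched[of k] by auto
  have slim_in: "g k \<in> piece_verts k - hfat Hext"
    "k < p+q \<Longrightarrow> g (r+k) \<in> piece_verts k - hfat Hext"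
    using g_core[OF k] g_matched[of k] slimD F_not_slim unfolding piece_verts_def by auto
  show "\<forall>f\<in>hfat Hext \<inter> piece_verts k. \<exists>x\<in>piece_verts k - hfat Hext. hadj Hext f x"
    using slim_nbrs slim_in g_core[OF k] g_matched[of k] slimD
    unfolding piece_verts_def by (auto split: if_splits)
qed

text \<open>Every vertex of H' lies in some piece: slim vertices by the indexing, fat vertices
  as the fat neighbour of one of their slim neighbours, F in every piece.\<close>

lemma slim_in_piece: "a < n \<Longrightarrow> \<exists>k<r. g a \<in> slim (piece k) \<and> fat_of (g a) \<in> piece_verts k"
proof (cases "a < r")
  case True thus ?thesis using slim_piece[of a] unfolding piece_verts_def by auto
next
  case False
  moreover assume "a < n"
  ultimately have k: "a = r + (a - r)" "a - r < p+q" by auto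
  thus ?thesis using slim_piece[of "a - r"] pqr unfolding piece_verts_def by auto
qed

lemma Hext_verts_pieces: "hverts Hext = (\<Union>k<r. piece_verts k)"
proof
  show "(\<Union>k<r. piece_verts k) \<subseteq> hverts Hext"
    using induced_piece unfolding induced_hsub_def piece_def by auto
  show "hverts Hext \<subseteq> (\<Union>k<r. piece_verts k)"
  proof
    fix x assume x: "x \<in> hverts Hext"
    consider "x = F" | "x \<in> slim H" | "x \<in> hfat H" using x unfolding slim_def by auto
    thus "x \<in> (\<Union>k<r. piece_verts k)"
    proof cases
      case 1 thus ?thesis using r_pos unfolding piece_verts_def by auto
    next
      case 2
      then obtain a where "a < n" "x = g a" using slim_enum by blast
      thus ?thesis using slim_in_piece unfolding piece_def slim_induced_on by blast
    next
      case 3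
      then obtain y where y: "y \<in> slim H" "hadj H x y" using H_fat_slim_nbr by blast
      hence "x = fat_of y" using fat_of_unique H_sym 3 by blast
      moreover obtain a where "a < n" "y = g a" using slim_enum[OF y(1)] by blast
      ultimately show ?thesis using slim_in_piece by blast
    qed
  qed
qed

lemma slim_pieces_disjoint: "k < r \<Longrightarrow> l < r \<Longrightarrow> k \<noteq> l \<Longrightarrow> slim (piece k) \<inter> slim (piece l) = {}"
  using slim_piece_enum g_eq_iff by blast

lemma keeps_fat_nbrs_piece: "k < r \<Longrightarrow> keeps_fat_nbrs (piece k) Hext"
  unfolding keeps_fat_nbrs_def
proof (intro ballI impI)
  fix x y assume k: "k < r" and x: "x \<in> slim (piece k)" and y: "y \<in> hfat Hext" "hadj Hext x y"
  have "y \<in> fat_nbrs Hext x" using y unfolding fat_nbrs_def by auto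
  moreover have "x = g k \<or> (k < p+q \<and> x = g (r+k))" using slim_piece[OF k] x by (auto split: if_splits)
  ultimately show "y \<in> hverts (piece k)"
    using fat_nbrs_Hext g_core[OF k] g_matched unfolding piece_def piece_verts_def
    by (auto split: if_splits)
qed

text \<open>Condition (iv) between different pieces.  Two core vertices share exactly the fat
  vertex F and are adjacent; any other pair shares fat_of iff adjacent.\<close>

lemma pieces_cross:
  assumes k: "k < r" "l < r" "k \<noteq> l" and x: "x \<in> slim (piece k)" and y: "y \<in> slim (piece l)"
  shows "card (fat_nbrs Hext x \<inter> fat_nbrs Hext y) \<le> 1 \<and>
         (card (fat_nbrs Hext x \<inter> fat_nbrs Hext y) = 1 \<longleftrightarrow> hadj Hext x y)"
proof -
  obtain a where a: "a < n" "x = g a" "piece_of a = k" using slim_piece_enum[OF k(1) x] by blast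
  obtain b where b: "b < n" "y = g b" "piece_of b = l" using slim_piece_enum[OF k(2) y] by blast
  have ab: "a \<noteq> b" using a b k by auto
  have xy: "x \<in> slim H" "y \<in> slim H" using a b g_slim by auto
  have adj: "hadj Hext x y = hadj H (g a) (g b)" using Hext_adj_slim[OF xy] a b by simp
  show ?thesis
  proof (cases "a < r \<and> b < r")
    case True
    with core_pair[of a b] ab a b have h: "hadj H (g a) (g b)" "fat_of x \<noteq> fat_of y" by auto
    have "fat_nbrs Hext x \<inter> fat_nbrs Hext y = {F}"
      using fat_nbrs_Hext[OF xy(1)] fat_nbrs_Hext[OF xy(2)] g_in_core_iff a b True h(2) fat_of_not_F xy
      by auto
    thus ?thesis using adj h by simp
  next
    case False
    have "fat_nbrs Hext x \<inter> fat_nbrs Hext y = (if fat_of x = fat_of y then {fat_of x} else {})"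
      using fat_nbrs_Hext[OF xy(1)] fat_nbrs_Hext[OF xy(2)] g_in_core_iff a b False fat_of_not_F xy
      by auto
    moreover have "hadj H (g a) (g b) \<longleftrightarrow> fat_of (g a) = fat_of (g b)"
      using unrelated_pair[OF a(1) b(1) ab _ False] a b k by simp
    ultimately show ?thesis using adj a b by simp
  qed
qed

lemma decomposition_pieces: "decomposition Hext {1..r} (\<lambda>i. piece (i - 1))"
proof -
  have idx: "i - 1 < r" "i - 1 = j - 1 \<longleftrightarrow> i = j" if "i \<in> {1..r}" "j \<in> {1..r}" for i j
    using that by auto
  have covers: "hverts Hext = (\<Union>i\<in>{1..r}. hverts (piece (i - 1)))"
    unfolding Hext_verts_pieces piece_def induced_on_simps
  proof (intro equalityI subsetI)
    fix x assume "x \<in> (\<Union>k<r. piece_verts k)"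
    then obtain k where "k < r" "x \<in> piece_verts k" by blast
    thus "x \<in> (\<Union>i\<in>{1..r}. piece_verts (i - 1))" by (intro UN_I[of "k + 1"]) auto
  next
    fix x assume "x \<in> (\<Union>i\<in>{1..r}. piece_verts (i - 1))"
    then obtain i where "i \<in> {1..r}" "x \<in> piece_verts (i - 1)" by blast
    thus "x \<in> (\<Union>k<r. piece_verts k)" by (intro UN_I[of "i - 1"]) auto
  qed
  show ?thesis
    unfolding decomposition_def
  proof (intro conjI covers ballI impI)
    fix i j assume ij: "i \<in> {1..r}" "j \<in> {1..r}" "i \<noteq> j"
    show "slim (piece (i - 1)) \<inter> slim (piece (j - 1)) = {}"
      using slim_pieces_disjoint[of "i - 1" "j - 1"] idx[OF ij(1,2)] idx[OF ij(2,1)] ij(3) by simp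
    fix x y assume xy: "x \<in> slim (piece (i - 1))" "y \<in> slim (piece (j - 1))"
    show "card (fat_nbrs Hext x \<inter> fat_nbrs Hext y) \<le> 1"
      and "(card (fat_nbrs Hext x \<inter> fat_nbrs Hext y) = 1) = hadj Hext x y"
      using pieces_cross[of "i - 1" "j - 1", OF _ _ _ xy] idx[OF ij(1,2)] idx[OF ij(2,1)] ij(3) by simp_all
  next
    fix i assume i: "i \<in> {1..r}"
    show "induced_hsub (piece (i - 1)) Hext" using induced_piece[OF idx(1)[OF i i]] .
    fix x y assume "x \<in> slim (piece (i - 1))" "y \<in> hfat Hext" "hadj Hext x y"
    thus "y \<in> hverts (piece (i - 1))"
      using keeps_fat_nbrs_piece[OF idx(1)[OF i i]] unfolding keeps_fat_nbrs_def by blast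
  qed
qed

section \<open>Isomorphism types of the pieces\<close>

lemma piece_H_II: "k < r \<Longrightarrow> \<not> k < p+q \<Longrightarrow> hiso (piece k) H_II"
proof -
  assume k: "k < r" "\<not> k < p+q"
  define u where "u = g k"
  define f where "f = fat_of u"
  have u: "u \<in> slim H" "u \<in> core" using g_core[OF k(1)] u_def by auto
  have f: "f \<in> hfat H" "f \<notin> core" using fat_of_fat[OF u(1)] fat_of_not_core[OF u(1)] f_def by auto
  have d: "u \<noteq> f" "u \<noteq> F" "f \<noteq> F" using u f slimD F_not_slim fat_of_not_F by (auto simp: f_def)
  have adj: "hadj H u f" "hadj H f u" "\<not> hadj H u u" "\<not> hadj H f f"
    using adj_fat_of[OF u(1)] H_sym H_irrefl f_def by auto
  have verts: "piece_verts k = {u, f, F}" unfolding piece_verts_def u_def f_def using k by simp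
  define \<psi> where "\<psi> z = (if z = u then 0 else if z = f then 1 else (2::nat))" for z
  show ?thesis unfolding hiso_def piece_def verts
  proof (intro exI[of _ \<psi>] conjI)
    let ?K = "induced_on Hext {u, f, F}"
    show "bij_betw \<psi> (hverts ?K) (hverts H_II)"
      using d by (auto simp: H_II_def \<psi>_def bij_betw_def inj_on_def)
    show "\<forall>x\<in>hverts ?K. x \<in> hfat ?K \<longleftrightarrow> \<psi> x \<in> hfat H_II"
      using d u f slimD by (auto simp: H_II_def \<psi>_def)
    show "\<forall>x\<in>hverts ?K. \<forall>y\<in>hverts ?K. hadj ?K x y \<longleftrightarrow> hadj H_II (\<psi> x) (\<psi> y)"
      using d u f adj F_not_adj F_not_core by (auto simp: H_II_def \<psi>_def edges_adj_def)
  qed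
qed

text \<open>Pieces with k < p: g k ~ g (r+k) adjacent with different fat neighbours, g k also
  adjacent to F; a copy of H_XVI.\<close>

lemma piece_H_XVI: "k < p \<Longrightarrow> hiso (piece k) H_XVI"
proof -
  assume kp: "k < p"
  have k: "k < r" "k < p+q" using kp pqr by auto
  define u where "u = g k"
  define w where "w = g (r+k)"
  define f where "f = fat_of u"
  define e where "e = fat_of w"
  have u: "u \<in> slim H" "u \<in> core" using g_core[OF k(1)] u_def by auto
  have w: "w \<in> slim H" "w \<notin> core" using g_matched[OF k(2)] w_def by auto
  have uw: "hadj H u w" "f \<noteq> e" using sigma_pair[OF kp] u_def w_def f_def e_def by auto
  have fe: "f \<in> hfat H" "f \<notin> core" "e \<in> hfat H" "e \<notin> core"
    using fat_of_fat fat_of_not_core u w f_def e_def by auto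
  have d: "u \<noteq> w" "u \<noteq> f" "u \<noteq> F" "u \<noteq> e" "w \<noteq> f" "w \<noteq> F" "w \<noteq> e" "f \<noteq> F" "f \<noteq> e" "F \<noteq> e"
    using u w fe uw slimD F_not_slim F_not_fat by auto
  have other: "e \<noteq> fat_of u" "f \<noteq> fat_of w" using uw(2) f_def e_def by auto
  have adj: "hadj H u f" "hadj H f u" "hadj H w e" "hadj H e w" "hadj H w u" "hadj H u w"
    using adj_fat_of[OF u(1)] adj_fat_of[OF w(1)] uw(1) H_sym unfolding f_def e_def by blast+
  have nonadj: "\<not> hadj H u u" "\<not> hadj H w w" "\<not> hadj H f f" "\<not> hadj H e e"
    "\<not> hadj H f e" "\<not> hadj H e f" "\<not> hadj H u e" "\<not> hadj H e u" "\<not> hadj H w f" "\<not> hadj H f w"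
    using H_irrefl H_fat_indep[OF fe(1) fe(3)] H_fat_indep[OF fe(3) fe(1)]
      not_adj_other_fat[OF u(1) fe(3) other(1)] not_adj_other_fat[OF w(1) fe(1) other(2)] by blast+
  have verts: "piece_verts k = {u, f, F, w, e}" unfolding piece_verts_def u_def f_def w_def e_def
    using k by auto
  define \<psi> where "\<psi> z = (if z = u then 0 else if z = w then 1 else if z = f then 2
                           else if z = F then 3 else (4::nat))" for z
  show ?thesis unfolding hiso_def piece_def verts
  proof (intro exI[of _ \<psi>] conjI)
    let ?K = "induced_on Hext {u, f, F, w, e}"
    show "bij_betw \<psi> (hverts ?K) (hverts H_XVI)"
      using d by (auto simp: H_XVI_def \<psi>_def bij_betw_def inj_on_def)
    show "\<forall>x\<in>hverts ?K. x \<in> hfat ?K \<longleftrightarrow> \<psi> x \<in> hfat H_XVI"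
      using d u w fe slimD by (auto simp: H_XVI_def \<psi>_def)
    show "\<forall>x\<in>hverts ?K. \<forall>y\<in>hverts ?K. hadj ?K x y \<longleftrightarrow> hadj H_XVI (\<psi> x) (\<psi> y)"
      using d u w fe adj nonadj F_not_adj F_not_core by (auto simp: H_XVI_def \<psi>_def edges_adj_def)
  qed
qed

text \<open>Pieces with p <= k < p+q: g k, g (r+k) non-adjacent with a common fat neighbour, g k
  also adjacent to F; a copy of H_XVII.\<close>

lemma piece_H_XVII: "p \<le> k \<Longrightarrow> k < p+q \<Longrightarrow> hiso (piece k) H_XVII"
proof -
  assume kq: "p \<le> k" "k < p+q"
  have k: "k < r" using kq pqr by auto
  define u where "u = g k"
  define w where "w = g (r+k)"
  define f where "f = fat_of u"
  have u: "u \<in> slim H" "u \<in> core" using g_core[OF k] u_def by auto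
  have w: "w \<in> slim H" "w \<notin> core" using g_matched[OF kq(2)] w_def by auto
  have uw: "\<not> hadj H u w" "fat_of w = f" using rho_pair[OF kq] u_def w_def f_def by auto
  have f: "f \<in> hfat H" "f \<notin> core" using fat_of_fat fat_of_not_core u f_def by auto
  have d: "u \<noteq> w" "u \<noteq> f" "u \<noteq> F" "w \<noteq> f" "w \<noteq> F" "f \<noteq> F"
    using u w f slimD F_not_slim F_not_fat by auto
  have adj: "hadj H u f" "hadj H f u" "hadj H w f" "hadj H f w" "\<not> hadj H w u" "\<not> hadj H u w"
    "\<not> hadj H u u" "\<not> hadj H w w" "\<not> hadj H f f"
    using adj_fat_of[OF u(1)] adj_fat_of[OF w(1)] H_sym H_irrefl f_def uw by auto
  have verts: "piece_verts k = {u, f, F, w}" unfolding piece_verts_def u_def f_def w_def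
    using kq k uw(2) w_def f_def u_def by auto
  define \<psi> where "\<psi> z = (if z = u then 0 else if z = w then 1 else if z = F then 2 else (3::nat))" for z
  show ?thesis unfolding hiso_def piece_def verts
  proof (intro exI[of _ \<psi>] conjI)
    let ?K = "induced_on Hext {u, f, F, w}"
    show "bij_betw \<psi> (hverts ?K) (hverts H_XVII)"
      using d by (auto simp: H_XVII_def \<psi>_def bij_betw_def inj_on_def)
    show "\<forall>x\<in>hverts ?K. x \<in> hfat ?K \<longleftrightarrow> \<psi> x \<in> hfat H_XVII"
      using d u w f slimD by (auto simp: H_XVII_def \<psi>_def)
    show "\<forall>x\<in>hverts ?K. \<forall>y\<in>hverts ?K. hadj ?K x y \<longleftrightarrow> hadj H_XVII (\<psi> x) (\<psi> y)"
      using d u w f adj F_not_adj F_not_core by (auto simp: H_XVII_def \<psi>_def edges_adj_def)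
  qed
qed

lemma piece_types: "k < r \<Longrightarrow> hiso (piece k) H_XVI \<or> hiso (piece k) H_XVII \<or> hiso (piece k) H_II"
  using piece_H_II piece_H_XVI piece_H_XVII by (meson not_le)

lemma decomposition_into_named_pieces:
  "\<exists>H' Hs. hoffman_graph H' \<and> induced_hsub H H' \<and> slim H' = slim H \<and>
     decomposition H' {1..r} Hs \<and>
     (\<forall>i \<in> {1..r}. hiso (Hs i) H_XVI \<or> hiso (Hs i) H_XVII \<or> hiso (Hs i) H_II)"
proof (intro exI[of _ Hext] exI[of _ "\<lambda>i. piece (i - 1)"] conjI ballI)
  fix i assume "i \<in> {1..r}"
  hence "i - 1 < r" by auto
  thus "hiso (piece (i - 1)) H_XVI \<or> hiso (piece (i - 1)) H_XVII \<or> hiso (piece (i - 1)) H_II"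
    by (rule piece_types)
qed (use hoffman_Hext induced_H_Hext slim_Hext decomposition_pieces in auto)

section \<open>Bounding the smallest eigenvalues\<close>

abbreviation \<alpha> :: real where "\<alpha> \<equiv> -1 - golden_tau"

text \<open>The entries of B(H') relevant inside a piece: -2 on core vertices (two fat
  neighbours), -1 on matched vertices, and +1 resp. -1 between g k and g (r+k) for a
  (+) resp. (-) edge of S(H).\<close>

lemma Bmat_piece:
  "k < r \<Longrightarrow> x \<in> slim (piece k) \<Longrightarrow> y \<in> slim (piece k) \<Longrightarrow> Bmat (piece k) x y = Bmat Hext x y"
  using Bmat_induced_hsub[OF induced_piece keeps_fat_nbrs_piece] by blast

lemma Bmat_Hext_diag: "x \<in> slim H \<Longrightarrow> Bmat Hext x x = (if x \<in> core then -2 else -1)"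
  using Hext_adj_slim[of x x] H_irrefl fat_nbrs_Hext[of x] fat_of_not_F[of x]
  unfolding Bmat_def by simp

lemma Bmat_Hext_sigma:
  assumes kp: "k < p"
  shows "Bmat Hext (g k) (g (r+k)) = 1 \<and> Bmat Hext (g (r+k)) (g k) = 1"
proof -
  have k: "k < r" "k < p+q" using kp pqr by auto
  note gs = g_core[OF k(1)] g_matched[OF k(2)]
  have h: "hadj H (g k) (g (r+k))" "fat_of (g k) \<noteq> fat_of (g (r+k))" using sigma_pair[OF kp] by auto
  have "fat_nbrs Hext (g k) \<inter> fat_nbrs Hext (g (r+k)) = {}"
    using fat_nbrs_Hext[of "g k"] fat_nbrs_Hext[of "g (r+k)"] gs h(2) fat_of_not_F by auto
  thus ?thesis using h(1) H_sym Hext_adj_slim gs unfolding Bmat_def by (simp add: Int_commute)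
qed

lemma Bmat_Hext_rho:
  assumes kq: "p \<le> k" "k < p+q"
  shows "Bmat Hext (g k) (g (r+k)) = -1 \<and> Bmat Hext (g (r+k)) (g k) = -1"
proof -
  have k: "k < r" using kq pqr by auto
  note gs = g_core[OF k] g_matched[OF kq(2)]
  have h: "\<not> hadj H (g k) (g (r+k))" "fat_of (g k) = fat_of (g (r+k))" using rho_pair[OF kq] by auto
  have "fat_nbrs Hext (g k) \<inter> fat_nbrs Hext (g (r+k)) = {fat_of (g k)}"
    using fat_nbrs_Hext[of "g k"] fat_nbrs_Hext[of "g (r+k)"] gs h(2) fat_of_not_F by auto
  moreover have "\<not> hadj Hext (g k) (g (r+k))" "\<not> hadj Hext (g (r+k)) (g k)"
    using h(1) H_sym Hext_adj_slim gs by blast+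
  ultimately show ?thesis unfolding Bmat_def by (simp add: Int_commute)
qed

text \<open>Each piece has lambda_min >= -1-tau, in the form of a bound on its quadratic form:
  a 1x1 block [-2] or a 2x2 block [[-2, s], [s, -1]] with s = 1 or -1.\<close>

lemma piece_form_bound: "k < r \<Longrightarrow> bform (piece k) v \<ge> \<alpha> * sqnorm (piece k) v"
proof -
  assume k: "k < r"
  show ?thesis
  proof (cases "k < p+q")
    case False
    hence sl: "slim (piece k) = {g k}" using slim_piece[OF k] by simp
    have "bform (piece k) v = -2 * (v (g k))^2" unfolding bform_def sl
      using Bmat_piece[OF k, of "g k" "g k"] Bmat_Hext_diag[of "g k"] g_core[OF k] sl
      by (simp add: power2_eq_square)
    moreover have "sqnorm (piece k) v = (v (g k))^2" unfolding sqnorm_def sl by simp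
    moreover have "\<alpha> * (v (g k))^2 \<le> -2 * (v (g k))^2"
      using golden_tau_ge_1 by (intro mult_right_mono) auto
    ultimately show ?thesis by simp
  next
    case True
    hence sl: "slim (piece k) = {g k, g (r+k)}" using slim_piece[OF k] by simp
    note gs = g_core[OF k] g_matched[OF True]
    have ne: "g k \<noteq> g (r+k)" using gs by auto
    define s :: real where "s = (if k < p then 1 else -1)"
    have B: "Bmat (piece k) (g k) (g k) = -2" "Bmat (piece k) (g (r+k)) (g (r+k)) = -1"
      "Bmat (piece k) (g k) (g (r+k)) = s" "Bmat (piece k) (g (r+k)) (g k) = s"
      using Bmat_piece[OF k] sl Bmat_Hext_diag gs Bmat_Hext_sigma Bmat_Hext_rho True
      unfolding s_def by auto
    have "bform (piece k) v = -2*(v (g k))^2 + 2*s*(v (g k))*(v (g (r+k))) - (v (g (r+k)))^2"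
      unfolding bform_def sl using ne B by (simp add: power2_eq_square algebra_simps)
    moreover have "sqnorm (piece k) v = (v (g k))^2 + (v (g (r+k)))^2"
      unfolding sqnorm_def sl using ne by simp
    moreover have "s * s = 1" unfolding s_def by simp
    ultimately show ?thesis using golden_two_by_two_bound[of s "v (g k)" "v (g (r+k))"] by simp
  qed
qed

lemma form_bound_Hext: "\<forall>v. bform Hext v \<ge> \<alpha> * sqnorm Hext v"
proof
  fix v
  have "bform (piece (i - 1)) w \<ge> \<alpha> * sqnorm (piece (i - 1)) w" if "i \<in> {1..r}" for i w
    using that by (intro piece_form_bound) auto
  thus "bform Hext v \<ge> \<alpha> * sqnorm Hext v"
    using decomposition_form_bound[OF decomposition_pieces _ hoffman_Hext] by simp
qed

text \<open>B(H) = B(H') + 1_R 1_R^T on the slim vertices (R the core): F is a common fat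
  neighbour exactly of pairs of core vertices.  So the form of B(H) dominates that of B(H').\<close>

lemma Bmat_H_Hext: "x \<in> slim H \<Longrightarrow> y \<in> slim H \<Longrightarrow>
    Bmat H x y = Bmat Hext x y + (if x \<in> core \<and> y \<in> core then 1 else 0)"
proof -
  assume xy: "x \<in> slim H" "y \<in> slim H"
  have F: "fat_of x \<noteq> F" "fat_of y \<noteq> F" using fat_of_not_F xy by auto
  have "card (fat_nbrs Hext x \<inter> fat_nbrs Hext y)
      = card (fat_nbrs H x \<inter> fat_nbrs H y) + (if x \<in> core \<and> y \<in> core then 1 else 0)"
  proof (cases "x \<in> core \<and> y \<in> core")
    case True
    hence "fat_nbrs Hext x \<inter> fat_nbrs Hext y = insert F (fat_nbrs H x \<inter> fat_nbrs H y)"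
      using fat_nbrs_Hext xy fat_nbrs_fat_of F by auto
    moreover have "F \<notin> fat_nbrs H x" using fat_nbrs_fat_of[OF xy(1)] F by auto
    ultimately show ?thesis using True by (simp add: fat_nbrs_fat_of[OF xy(1)])
  next
    case False
    hence "fat_nbrs Hext x \<inter> fat_nbrs Hext y = fat_nbrs H x \<inter> fat_nbrs H y"
      using fat_nbrs_Hext xy fat_nbrs_fat_of F by auto
    thus ?thesis using False by simp
  qed
  thus ?thesis using Hext_adj_slim[OF xy] unfolding Bmat_def by simp
qed

lemma bform_H_ge_Hext: "bform H v \<ge> bform Hext v"
proof -
  define c where "c x = (if x \<in> core then v x else 0)" for x
  have "bform H v = (\<Sum>x\<in>slim H. \<Sum>y\<in>slim H. Bmat Hext x y * v x * v y + c x * c y)"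
    unfolding bform_def by (intro sum.cong refl) (simp add: Bmat_H_Hext c_def algebra_simps)
  also have "\<dots> = bform Hext v + (\<Sum>x\<in>slim H. c x)^2"
    unfolding bform_def slim_Hext by (simp add: sum.distrib power2_eq_square sum_product)
  finally show ?thesis by simp
qed

lemma lambda_min_H: "lambda_min H \<ge> \<alpha>"
proof (rule lambda_min_ge_of_form_bound[OF hg])
  show "slim H \<noteq> {}" using g_core[OF r_pos] by auto
  show "\<forall>v. \<alpha> * sqnorm H v \<le> bform H v"
  proof
    fix v
    have "\<alpha> * sqnorm Hext v \<le> bform Hext v" using form_bound_Hext by blast
    thus "\<alpha> * sqnorm H v \<le> bform H v"
      using bform_H_ge_Hext[of v] unfolding sqnorm_def slim_Hext by simp
  qed
qed

lemma merged_pieces_bound: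
  assumes J: "J \<subseteq> {1..r}" "J \<noteq> {}"
  shows "lambda_min (merge Hext (\<lambda>i. piece (i - 1)) J) \<ge> \<alpha> \<and>
         slim (merge Hext (\<lambda>i. piece (i - 1)) J) \<inter> slim H \<noteq> {}"
proof -
  let ?M = "merge Hext (\<lambda>i. piece (i - 1)) J"
  note D = decomposition_pieces
  have sub: "induced_hsub ?M Hext" by (rule induced_hsub_merge[OF D hoffman_Hext J(1)])
  have bound: "\<forall>v. bform ?M v \<ge> \<alpha> * sqnorm ?M v"
    by (rule form_bound_induced_hsub[OF sub hoffman_Hext keeps_fat_nbrs_merge[OF D J(1)] form_bound_Hext])
  obtain i where i: "i \<in> J" using J(2) by blast
  hence "i - 1 < r" using J(1) by force
  hence "g (i - 1) \<in> slim (piece (i - 1))" "g (i - 1) \<in> slim H"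
    using slim_piece[of "i - 1"] g_core by auto
  hence gi: "g (i - 1) \<in> slim ?M \<inter> slim H" using slim_merge[OF D J(1)] i by blast
  have "hoffman_graph ?M" using sub unfolding induced_hsub_def by blast
  hence "lambda_min ?M \<ge> \<alpha>" using lambda_min_ge_of_form_bound bound gi by blast
  thus ?thesis using gi by blast
qed

text \<open>Second claim: for r >= 2, splitting the pieces into the first one and the rest
  witnesses (-1-tau)-reducibility.\<close>

lemma reducible_H:
  assumes r2: "r \<ge> 2"
  shows "reducible \<alpha> H"
proof -
  define Hs where "Hs k = merge Hext (\<lambda>i. piece (i - 1)) (if k = (1::nat) then {1} else {2..r})" for k
  have D: "decomposition Hext {1, 2} Hs"
    unfolding Hs_def
  proof (rule decomposition_merge_two[OF decomposition_pieces hoffman_Hext])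
    show "{1} \<union> {2..r} = {1..r}" "{1} \<inter> {2..r} = {}" using r2 by auto
  qed
  have "lambda_min (Hs k) \<ge> \<alpha> \<and> slim (Hs k) \<inter> slim H \<noteq> {}" for k
    unfolding Hs_def by (rule merged_pieces_bound) (use r2 in auto)
  thus ?thesis
    unfolding reducible_def using lambda_min_H hoffman_Hext induced_H_Hext D by blast
qed

end

lemma sgraph_iso_inverse:
  assumes "sgraph_iso S T"
  obtains g where "bij_betw g (sverts T) (sverts S)"
    and "\<forall>a\<in>sverts T. \<forall>b\<in>sverts T.
           spos S (g a) (g b) = spos T a b \<and> sneg S (g a) (g b) = sneg T a b"
proof -
  obtain f where f: "bij_betw f (sverts S) (sverts T)"
    and edges: "\<forall>x\<in>sverts S. \<forall>y\<in>sverts S.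
         (spos S x y \<longleftrightarrow> spos T (f x) (f y)) \<and> (sneg S x y \<longleftrightarrow> sneg T (f x) (f y))"
    using assms unfolding sgraph_iso_def by blast
  define g where "g = inv_into (sverts S) f"
  have g: "bij_betw g (sverts T) (sverts S)" unfolding g_def by (rule bij_betw_inv_into[OF f])
  have inv: "g a \<in> sverts S" "f (g a) = a" if "a \<in> sverts T" for a
    using bij_betw_apply[OF g that] bij_betw_inv_into_right[OF f that] unfolding g_def by auto
  have "spos S (g a) (g b) = spos T a b \<and> sneg S (g a) (g b) = sneg T a b"
    if "a \<in> sverts T" "b \<in> sverts T" for a b
    using edges inv[OF that(1)] inv[OF that(2)] by simp
  thus ?thesis using that[OF g] by blast
qed

lemma induced_hsub_refl: "hoffman_graph H \<Longrightarrow> induced_hsub H H"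
  unfolding induced_hsub_def hoffman_graph_def by auto

text \<open>A Hoffman graph without slim vertices is empty (each fat vertex needs a slim
  neighbour), so the empty family decomposes it; this is the case r = 0.\<close>

lemma decomposition_no_slim:
  assumes H: "hoffman_graph H" and no_slim: "slim H = {}"
  shows "\<exists>H' Hs. hoffman_graph H' \<and> induced_hsub H H' \<and> slim H' = slim H \<and> decomposition H' {} Hs"
proof -
  have "hverts H = {}" using H no_slim unfolding hoffman_graph_def slim_def by blast
  hence "decomposition H {} (\<lambda>_. H)" unfolding decomposition_def by simp
  thus ?thesis using H induced_hsub_refl[OF H] by blast
qed

theorem mainTheorem12:
  fixes H :: "'a hgraph" and p q r :: nat
  assumes inf: "infinite (UNIV :: 'a set)"
    and hg: "hoffman_graph H"
    and one_fat: "\<forall>x \<in> slim H. card (fat_nbrs H x) = 1"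
    and pqr: "p + q \<le> r"
    and Q: "sgraph_iso (special_graph H) (Qgraph p q r)"
  shows "(\<exists>H' Hs. hoffman_graph H' \<and> induced_hsub H H' \<and> slim H' = slim H \<and>
            decomposition H' {1..r} Hs \<and>
            (\<forall>i \<in> {1..r}. hiso (Hs i) H_XVI \<or> hiso (Hs i) H_XVII \<or> hiso (Hs i) H_II))
         \<and> (r \<ge> 2 \<longrightarrow> reducible (-1 - golden_tau) H)"
proof -
  have verts: "sverts (special_graph H) = slim H" "sverts (Qgraph p q r) = {0..<r+p+q}"
    by (simp_all add: special_graph_def Qgraph_def)
  obtain g where g: "bij_betw g {0..<r+p+q} (slim H)"
    and edges: "\<forall>a\<in>{0..<r+p+q}. \<forall>b\<in>{0..<r+p+q}.
         spos (special_graph H) (g a) (g b) = spos (Qgraph p q r) a b \<and>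
         sneg (special_graph H) (g a) (g b) = sneg (Qgraph p q r) a b"
    using sgraph_iso_inverse[OF Q] unfolding verts by blast
  show ?thesis
  proof (cases "r = 0")
    case True
    hence "slim H = {}" using g pqr by (simp add: bij_betw_def)
    thus ?thesis using decomposition_no_slim[OF hg] True by simp
  next
    case False
    have "finite (hverts H)" using hg unfolding hoffman_graph_def by blast
    then obtain F where F: "F \<notin> hverts H" using ex_new_if_finite[OF inf] by blast
    have Q_ind: "Q_indexed H p q r g F"
      using hg one_fat pqr False g edges F unfolding Q_indexed_def by simp
    show ?thesis
      using Q_indexed.decomposition_into_named_pieces[OF Q_ind] Q_indexed.reducible_H[OF Q_ind] by blast
  qed
qed

end
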